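(* Let $a:\mathbb{R}^d\to[0,\infty)$ satisfy $a(y)=a(-y)$, $\int_{\mathbb{R}^d}a=1$, $\widehat a\in L^1(\mathbb{R}^d)$, and $a(x)\le Ce^{-|x|^\alpha}$ for some $C<\infty$, $\alpha>1$. Let $a_n=a*a*\dots*a$ ($n$ factors). Then there exists a constant $c$ such that for all $n\ge1$ and all $y$ with $|y|/n\ge1$, \[|a_n(y)|\le e^{n\left(c-\frac12\left(\frac{|y|}{n}\right)^\alpha\right)}.\]
   Context: $\widehat a(k)=\int e^{-i(k,y)}a(y)\,dy$. *)

theory Defs
  imports "HOL-Analysis.Analysis"
begin

definition fourier :: "('a::euclidean_space \<Rightarrow> real) \<Rightarrow> 'a \<Rightarrow> complex" where
  "fourier a k = (LINT y|lborel. cis (- (k \<bullet> y)) * complex_of_real (a y))"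

definition conv :: "('a::euclidean_space \<Rightarrow> real) \<Rightarrow> ('a \<Rightarrow> real) \<Rightarrow> 'a \<Rightarrow> real" where
  "conv f g x = (LINT y|lborel. f (x - y) * g y)"

text \<open>n-fold convolution power a_n = a * ... * a (n factors), n \<ge> 1.\<close>
fun conv_pow :: "('a::euclidean_space \<Rightarrow> real) \<Rightarrow> nat \<Rightarrow> 'a \<Rightarrow> real" where
  "conv_pow a 0 = a"
| "conv_pow a (Suc 0) = a"
| "conv_pow a (Suc n) = conv a (conv_pow a n)"

end

theory Submission imports Defs "HOL-Probability.Distributions" begin

text \<open>
  By induction on n, a_n(y) \<le> M^n exp (-1/2 n^(1-\<alpha>) |y|^\<alpha>) for a suitable M.
  In the step, convexity of t \<mapsto> t^\<alpha> gives (n+1)^(1-\<alpha>) |y|^\<alpha> \<le> |y-x|^\<alpha> + n^(1-\<alpha>) |x|^\<alpha>,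
  so the integrand a(y-x) a_n(x) is at most C M^n times the new envelope times exp (-1/2 |x-y|^\<alpha>):
  only half of the decay of a is spent, and the other half is integrable.
  Since n^(1-\<alpha>) |y|^\<alpha> = n (|y|/n)^\<alpha>, the theorem follows with c = ln M.
\<close>

lemma nn_integral_exp_neg_abs_finite:
  fixes l :: real assumes l: "l > 0"
  shows "(\<integral>\<^sup>+ t. ennreal (exp (- l * \<bar>t\<bar>)) \<partial>lborel) < \<infinity>"
proof -
  have total: "(\<integral>\<^sup>+ t. ennreal (exponential_density l t) \<partial>lborel) = 1"
  proof -
    interpret prob_space "density lborel (exponential_density l)"
      using prob_space_exponential_density[OF l] .
    show ?thesis using emeasure_space_1 by (simp add: emeasure_density)
  qed
  have total_reflected: "(\<integral>\<^sup>+ t. ennreal (exponential_density l (- t)) \<partial>lborel) = 1"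
  proof -
    have "(\<integral>\<^sup>+ t. ennreal (exponential_density l t) \<partial>distr lborel borel uminus)
        = (\<integral>\<^sup>+ t. ennreal (exponential_density l (- t)) \<partial>lborel)"
      by (subst nn_integral_distr) (auto simp: exponential_density_def)
    then show ?thesis using total by (simp add: lborel_distr_uminus)
  qed
  have pointwise: "ennreal (exp (- l * \<bar>t\<bar>))
      \<le> ennreal (1/l) * (ennreal (exponential_density l t) + ennreal (exponential_density l (- t)))" for t
    using l exponential_density_nonneg[OF l, of t] exponential_density_nonneg[OF l, of "-t"]
    by (auto simp: exponential_density_def abs_if ennreal_mult'[symmetric]
        ennreal_plus[symmetric] simp del: ennreal_plus intro!: ennreal_leI)
  have "(\<integral>\<^sup>+ t. ennreal (exp (- l * \<bar>t\<bar>)) \<partial>lborel)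
      \<le> (\<integral>\<^sup>+ t. ennreal (1/l) * (ennreal (exponential_density l t) + ennreal (exponential_density l (- t))) \<partial>lborel)"
    by (intro nn_integral_mono pointwise)
  also have "\<dots> = ennreal (1/l) * 2"
    by (simp add: nn_integral_cmult nn_integral_add total total_reflected one_add_one)
  also have "\<dots> < \<infinity>"
    by (simp add: ennreal_mult_less_top)
  finally show ?thesis .
qed

lemma nn_integral_exp_neg_norm_finite:
  fixes l :: real assumes l: "l > 0"
  shows "(\<integral>\<^sup>+ z. ennreal (exp (- l * norm (z::'a::euclidean_space))) \<partial>lborel) < \<infinity>"
proof -
  define l' where "l' = l / real DIM('a)"
  have l': "l' > 0" using l by (simp add: l'_def)
  have "exp (- l * norm z) \<le> (\<Prod>b\<in>Basis. exp (- l' * \<bar>z \<bullet> b\<bar>))" for z :: 'a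
  proof -
    have "(\<Sum>b\<in>Basis. \<bar>z \<bullet> b\<bar>) \<le> (\<Sum>b\<in>(Basis::'a set). norm z)"
      by (intro sum_mono Basis_le_norm)
    then have "l' * (\<Sum>b\<in>Basis. \<bar>z \<bullet> b\<bar>) \<le> l * norm z"
      using l by (simp add: l'_def field_simps)
    then show ?thesis
      by (simp add: exp_sum[symmetric] sum_distrib_left[symmetric] sum_negf)
  qed
  then have "(\<integral>\<^sup>+ z. ennreal (exp (- l * norm (z::'a))) \<partial>lborel)
      \<le> (\<integral>\<^sup>+ z. (\<Prod>b\<in>Basis. ennreal (exp (- l' * \<bar>(z::'a) \<bullet> b\<bar>))) \<partial>lborel)"
    by (intro nn_integral_mono) (simp add: prod_ennreal ennreal_leI)
  also have "\<dots> = (\<Prod>b\<in>(Basis::'a set). \<integral>\<^sup>+ t. ennreal (exp (- l' * \<bar>t\<bar>)) \<partial>lborel)"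
    by (rule nn_integral_lborel_prod) auto
  also have "\<dots> < \<infinity>"
    using nn_integral_exp_neg_abs_finite[OF l']
    by (simp add: less_top[symmetric] power_eq_top_ennreal)
  finally show ?thesis .
qed

lemma exp_neg_powr_le:
  fixes t c \<alpha> :: real assumes "t \<ge> 0" "c \<ge> 0" "\<alpha> \<ge> 1"
  shows "exp (- c * t powr \<alpha>) \<le> exp c * exp (- c * t)"
proof -
  have "t - 1 \<le> t powr \<alpha>"
  proof (cases "t \<ge> 1")
    case True
    then show ?thesis using assms powr_mono[of 1 \<alpha> t] by simp
  qed (use powr_ge_zero[of t \<alpha>] in linarith)
  then have "c * (t - 1) \<le> c * t powr \<alpha>"
    using assms(2) by (rule mult_left_mono)
  then have "- c * t powr \<alpha> \<le> c + - c * t"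
    by (simp add: algebra_simps)
  then show ?thesis by (simp flip: exp_add)
qed

lemma integrable_exp_neg_norm_powr:
  fixes c \<alpha> :: real assumes c: "c > 0" and \<alpha>: "\<alpha> \<ge> 1"
  shows "integrable lborel (\<lambda>z::'a::euclidean_space. exp (- c * norm z powr \<alpha>))"
proof (rule integrableI_bounded)
  have pointwise: "exp (- c * norm z powr \<alpha>) \<le> exp c * exp (- c * norm z)" for z :: 'a
    using exp_neg_powr_le[OF norm_ge_zero less_imp_le[OF c] \<alpha>] .
  have "(\<integral>\<^sup>+ z. ennreal (norm (exp (- c * norm (z::'a) powr \<alpha>))) \<partial>lborel)
      \<le> (\<integral>\<^sup>+ z. ennreal (exp c) * ennreal (exp (- c * norm (z::'a))) \<partial>lborel)"
    using pointwise by (intro nn_integral_mono) (simp add: ennreal_mult'[symmetric] ennreal_leI)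
  also have "\<dots> < \<infinity>"
    using nn_integral_exp_neg_norm_finite[OF c, where 'a='a]
    by (simp add: nn_integral_cmult ennreal_mult_less_top)
  finally show "(\<integral>\<^sup>+ z. ennreal (norm (exp (- c * norm (z::'a) powr \<alpha>))) \<partial>lborel) < \<infinity>" .
qed measurable

lemma powr_add_le_weighted:
  fixes A B t \<alpha> :: real
  assumes A: "A \<ge> 0" and B: "B \<ge> 0" and t: "0 < t" "t < 1" and \<alpha>: "\<alpha> \<ge> 1"
  shows "(A + B) powr \<alpha> \<le> t powr (1 - \<alpha>) * A powr \<alpha> + (1 - t) powr (1 - \<alpha>) * B powr \<alpha>"
proof -
  have weight_ge_1: "s powr (1 - \<alpha>) \<ge> 1" if "0 < s" "s \<le> 1" for s :: real
    using powr_mono2'[of "1 - \<alpha>" s 1] that \<alpha> by simp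
  consider "A = 0" | "B = 0" | "A > 0" "B > 0" using A B by linarith
  then show ?thesis
  proof cases
    case 1
    then show ?thesis
      using weight_ge_1[of "1 - t"] t mult_right_mono[of 1 _ "B powr \<alpha>"] by simp
  next
    case 2
    then show ?thesis
      using weight_ge_1[of t] t mult_right_mono[of 1 _ "A powr \<alpha>"] by simp
  next
    case 3
    \<comment> \<open>Jensen for \<open>x \<mapsto> x powr \<alpha>\<close> at the points \<open>A/t\<close> and \<open>B/(1-t)\<close>.\<close>
    have "((1 - (1 - t)) *\<^sub>R (A / t) + (1 - t) *\<^sub>R (B / (1 - t))) powr \<alpha>
        \<le> (1 - (1 - t)) * (A / t) powr \<alpha> + (1 - t) * (B / (1 - t)) powr \<alpha>"
      using 3 t by (intro convex_onD[OF powr_convex[OF \<alpha>]]) auto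
    moreover have "s * (X / s) powr \<alpha> = s powr (1 - \<alpha>) * X powr \<alpha>" if "s > 0" "X \<ge> 0" for s X :: real
      using that by (simp add: powr_divide powr_diff field_simps)
    ultimately show ?thesis using 3 t by simp
  qed
qed

lemma norm_add_powr_le:
  fixes u x :: "'a::real_normed_vector" and N \<alpha> :: real
  assumes N: "N > 0" and \<alpha>: "\<alpha> \<ge> 1"
  shows "(N + 1) powr (1 - \<alpha>) * norm (u + x) powr \<alpha> \<le> norm u powr \<alpha> + N powr (1 - \<alpha>) * norm x powr \<alpha>"
proof -
  define t where "t = 1 / (N + 1)"
  have t: "0 < t" "t < 1" "1 - t = N / (N + 1)" using N by (auto simp: t_def field_simps)
  have "norm (u + x) powr \<alpha> \<le> (norm u + norm x) powr \<alpha>"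
    using \<alpha> by (intro powr_mono2 norm_triangle_ineq) auto
  also have "\<dots> \<le> t powr (1 - \<alpha>) * norm u powr \<alpha> + (1 - t) powr (1 - \<alpha>) * norm x powr \<alpha>"
    using t \<alpha> by (intro powr_add_le_weighted) auto
  finally have "(N + 1) powr (1 - \<alpha>) * norm (u + x) powr \<alpha>
      \<le> (N + 1) powr (1 - \<alpha>) * (t powr (1 - \<alpha>) * norm u powr \<alpha> + (1 - t) powr (1 - \<alpha>) * norm x powr \<alpha>)"
    by (rule mult_left_mono) simp
  also have "\<dots> = ((N + 1) * t) powr (1 - \<alpha>) * norm u powr \<alpha> + ((N + 1) * (1 - t)) powr (1 - \<alpha>) * norm x powr \<alpha>"
    unfolding powr_mult by (simp add: distrib_left mult_ac)
  also have "\<dots> = norm u powr \<alpha> + N powr (1 - \<alpha>) * norm x powr \<alpha>"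
    using N t by (simp add: t_def)
  finally show ?thesis .
qed

lemma nn_integral_lborel_translate:
  fixes f :: "'a::euclidean_space \<Rightarrow> ennreal"
  assumes [measurable]: "f \<in> borel_measurable borel"
  shows "(\<integral>\<^sup>+ x. f (x - y) \<partial>lborel) = (\<integral>\<^sup>+ x. f x \<partial>lborel)"
proof -
  have "(\<integral>\<^sup>+ x. f x \<partial>distr lborel borel ((+) (- y))) = (\<integral>\<^sup>+ x. f (- y + x) \<partial>lborel)"
    by (subst nn_integral_distr) auto
  then show ?thesis by (simp add: lborel_distr_plus)
qed

lemma conv_nonneg:
  assumes "\<And>x. 0 \<le> f x" "\<And>x. 0 \<le> g x"
  shows "0 \<le> conv f g x"
  unfolding conv_def using assms by (intro integral_nonneg_AE) auto

lemma conv_pow_Suc: "n \<ge> 1 \<Longrightarrow> conv_pow a (Suc n) = conv a (conv_pow a n)"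
  by (cases n) auto

lemma conv_pow_nonneg:
  assumes "\<And>x. 0 \<le> a x"
  shows "0 \<le> conv_pow a n x"
  using assms by (induction a n arbitrary: x rule: conv_pow.induct) (auto intro: conv_nonneg)

lemma conv_le_translate_bound:
  fixes f h g :: "'a::euclidean_space \<Rightarrow> real"
  assumes f: "\<And>x. 0 \<le> f x" and h: "\<And>x. 0 \<le> h x"
    and g: "\<And>z. 0 \<le> g z" "integrable lborel g" and B: "B \<ge> 0"
    and le: "\<And>x. f (y - x) * h x \<le> B * g (x - y)"
  shows "conv f h y \<le> B * (LINT z|lborel. g z)"
proof (cases "integrable lborel (\<lambda>x. f (y - x) * h x)")
  case True
  have [measurable]: "g \<in> borel_measurable borel" using g(2) by auto
  have "ennreal (conv f h y) = (\<integral>\<^sup>+ x. ennreal (f (y - x) * h x) \<partial>lborel)"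
    unfolding conv_def using True f h by (intro nn_integral_eq_integral[symmetric]) auto
  also have "\<dots> \<le> (\<integral>\<^sup>+ x. ennreal B * ennreal (g (x - y)) \<partial>lborel)"
    using le B g(1) by (intro nn_integral_mono) (simp add: ennreal_mult'[symmetric] ennreal_leI)
  also have "\<dots> = ennreal B * (\<integral>\<^sup>+ x. ennreal (g x) \<partial>lborel)"
    by (simp add: nn_integral_cmult nn_integral_lborel_translate[where f="\<lambda>x. ennreal (g x)"])
  also have "\<dots> = ennreal (B * (LINT z|lborel. g z))"
    using g B by (simp add: nn_integral_eq_integral ennreal_mult')
  finally show ?thesis
    using B g by (simp add: ennreal_le_iff integral_nonneg_AE)
next
  case False
  then show ?thesis
    using B g by (simp add: conv_def not_integrable_integral_eq integral_nonneg_AE)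
qed

lemma conv_le_decay_envelope:
  fixes a f :: "'a::euclidean_space \<Rightarrow> real" and \<alpha> C B N :: real
  assumes a: "\<And>x. 0 \<le> a x" and decay: "\<And>x. a x \<le> C * exp (- (norm x powr \<alpha>))"
    and f: "\<And>x. 0 \<le> f x" and f_le: "\<And>x. f x \<le> B * exp (- (1/2) * N powr (1 - \<alpha>) * norm x powr \<alpha>)"
    and \<alpha>: "\<alpha> \<ge> 1" and N: "N > 0" and C: "C \<ge> 0" and B: "B \<ge> 0"
  shows "conv a f y \<le> C * B * (LINT z|lborel. exp (- (1/2) * norm (z::'a) powr \<alpha>))
                          * exp (- (1/2) * (N + 1) powr (1 - \<alpha>) * norm y powr \<alpha>)"
proof -
  define E where "E = exp (- (1/2) * (N + 1) powr (1 - \<alpha>) * norm y powr \<alpha>)"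
  have "a (y - x) * f x \<le> (C * B * E) * exp (- (1/2) * norm (x - y) powr \<alpha>)" for x
  proof -
    have "(N + 1) powr (1 - \<alpha>) * norm y powr \<alpha> \<le> norm (y - x) powr \<alpha> + N powr (1 - \<alpha>) * norm x powr \<alpha>"
      using norm_add_powr_le[OF N \<alpha>, of "y - x" x] by simp
    then have exponent: "- (norm (y - x) powr \<alpha>) - (1/2) * N powr (1 - \<alpha>) * norm x powr \<alpha>
        \<le> - (1/2) * (N + 1) powr (1 - \<alpha>) * norm y powr \<alpha> + - (1/2) * norm (x - y) powr \<alpha>"
      by (simp add: norm_minus_commute)
    have "a (y - x) * f x \<le> (C * exp (- (norm (y - x) powr \<alpha>))) * (B * exp (- (1/2) * N powr (1 - \<alpha>) * norm x powr \<alpha>))"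
      using decay f_le a f C by (intro mult_mono) auto
    also have "\<dots> = C * B * exp (- (norm (y - x) powr \<alpha>) - (1/2) * N powr (1 - \<alpha>) * norm x powr \<alpha>)"
      by (simp add: mult_ac flip: exp_add)
    also have "\<dots> \<le> C * B * exp (- (1/2) * (N + 1) powr (1 - \<alpha>) * norm y powr \<alpha> + - (1/2) * norm (x - y) powr \<alpha>)"
      using exponent C B by (intro mult_left_mono) auto
    finally show ?thesis by (simp only: E_def exp_add mult_ac)
  qed
  then have "conv a f y \<le> (C * B * E) * (LINT z|lborel. exp (- (1/2) * norm (z::'a) powr \<alpha>))"
    using a f C B integrable_exp_neg_norm_powr[of "1/2" \<alpha>] \<alpha>
    by (intro conv_le_translate_bound[where g="\<lambda>z. exp (- (1/2) * norm z powr \<alpha>)"]) (auto simp: E_def)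
  then show ?thesis by (simp add: E_def mult_ac)
qed

lemma conv_pow_le_envelope:
  fixes a :: "'a::euclidean_space \<Rightarrow> real" and \<alpha> C :: real
  assumes a: "\<And>x. 0 \<le> a x" and decay: "\<And>x. a x \<le> C * exp (- (norm x powr \<alpha>))" and \<alpha>: "\<alpha> \<ge> 1"
  obtains M where "M \<ge> 1"
    "\<And>n y. n \<ge> 1 \<Longrightarrow> conv_pow a n y \<le> M ^ n * exp (- (1/2) * real n powr (1 - \<alpha>) * norm y powr \<alpha>)"
proof
  define K where "K = (LINT z|lborel. exp (- (1/2) * norm (z::'a) powr \<alpha>))"
  have C: "C \<ge> 0" using a[of 0] decay[of 0] by (simp add: zero_le_mult_iff)
  define M where "M = max 1 (max C (C * K))"
  show M: "M \<ge> 1" by (simp add: M_def)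
  fix n :: nat and y :: 'a
  assume "n \<ge> 1"
  then show "conv_pow a n y \<le> M ^ n * exp (- (1/2) * real n powr (1 - \<alpha>) * norm y powr \<alpha>)"
  proof (induction n arbitrary: y rule: nat_induct_at_least)
    case base
    have "a y \<le> C * exp (- (norm y powr \<alpha>))" by (rule decay)
    also have "\<dots> \<le> M * exp (- (1/2) * norm y powr \<alpha>)"
      using C by (intro mult_mono) (auto simp: M_def)
    finally show ?case by simp
  next
    case (Suc n)
    have "conv_pow a (Suc n) y \<le> C * M ^ n * K * exp (- (1/2) * (real n + 1) powr (1 - \<alpha>) * norm y powr \<alpha>)"
      unfolding conv_pow_Suc[OF Suc.hyps] K_def
      using Suc.hyps Suc.IH C M \<alpha> a decay
      by (intro conv_le_decay_envelope conv_pow_nonneg) auto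
    also have "\<dots> \<le> M * M ^ n * exp (- (1/2) * (real n + 1) powr (1 - \<alpha>) * norm y powr \<alpha>)"
      using M C by (intro mult_right_mono) (auto simp: M_def)
    finally show ?case by (simp add: add.commute)
  qed
qed

theorem mainTheorem8:
  fixes a :: "'a::euclidean_space \<Rightarrow> real" and C \<alpha> :: real
  assumes meas: "a \<in> borel_measurable lborel"
    and nonneg: "\<And>x. a x \<ge> 0"
    and symm: "\<And>y. a y = a (- y)"
    and int_a: "integrable lborel a"
    and int_one: "(LINT y|lborel. a y) = 1"
    and four_L1: "integrable lborel (fourier a)"
    and alpha: "\<alpha> > 1"
    and decay: "\<And>x. a x \<le> C * exp (- (norm x powr \<alpha>))"
  shows "\<exists>c::real. \<forall>n::nat. \<forall>y::'a. n \<ge> 1 \<longrightarrow> norm y / real n \<ge> 1 \<longrightarrow>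
           \<bar>conv_pow a n y\<bar> \<le> exp (real n * (c - 1/2 * (norm y / real n) powr \<alpha>))"
proof -
  obtain M where M: "M \<ge> 1" and envelope: "\<And>n y. n \<ge> 1 \<Longrightarrow>
      conv_pow a n y \<le> M ^ n * exp (- (1/2) * real n powr (1 - \<alpha>) * norm y powr \<alpha>)"
    using conv_pow_le_envelope[OF nonneg decay] alpha by auto
  show ?thesis
  proof (intro exI[of _ "ln M"] allI impI)
    fix n :: nat and y :: 'a
    assume n: "n \<ge> 1" and "norm y / real n \<ge> 1"
    have power: "M ^ n = exp (real n * ln M)"
      using M by (simp add: exp_of_nat_mult)
    have scaling: "real n powr (1 - \<alpha>) * norm y powr \<alpha> = real n * (norm y / real n) powr \<alpha>"
      using n by (simp add: powr_divide powr_diff)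
    have "\<bar>conv_pow a n y\<bar> = conv_pow a n y" using conv_pow_nonneg[of a n y] nonneg by simp
    also have "\<dots> \<le> M ^ n * exp (- (1/2) * real n powr (1 - \<alpha>) * norm y powr \<alpha>)"
      using envelope[OF n] .
    also have "\<dots> = exp (real n * (ln M - 1/2 * (norm y / real n) powr \<alpha>))"
      unfolding power mult.assoc scaling by (simp add: algebra_simps flip: exp_add)
    finally show "\<bar>conv_pow a n y\<bar> \<le> exp (real n * (ln M - 1/2 * (norm y / real n) powr \<alpha>))" .
  qed
qed

end
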